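(* Let $\epsilon>0$ be sufficiently small. Consider 4 players where players 3 and 4 have the uniform (Lebesgue) valuation on $[0,1]$; player 1 has a nonatomic valuation giving value $\frac12-\epsilon$ to $(0,\epsilon)$, $3\epsilon$ to $(\frac34,\frac34+3\epsilon)$, $\frac12-2\epsilon$ to $(1-\epsilon,1)$, and $0$ elsewhere; player 2 has a nonatomic valuation giving value $3\epsilon$ to $(\epsilon,2\epsilon)$, $\frac12-2\epsilon$ to $(\frac14-\epsilon,\frac14)$, $\frac12-\epsilon$ to $(\frac12,\frac12+\epsilon)$, and $0$ elsewhere. Then every envy-free complete connected division has egalitarian welfare at most $\frac14+2\epsilon$, while the partial division giving $(0,2\epsilon)$ to player 1, $(2\epsilon,\frac12)$ to player 3, $(\frac12,\frac12+\epsilon)$ to player 2, $(\frac12+\epsilon,1-\epsilon)$ to player 4 (discarding $(1-\epsilon,1)$) is envy-free with every player receiving utility at least $\frac12-2\epsilon$. Hence this instance exhibits an egalitarian $\alpha$-dumping paradox with $\alpha=\frac{2-8\epsilon}{1+8\epsilon}$.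
   Context: A (connected) division for players $1,\dots,n$ of the cake $[0,1]$ is a sequence $(X_1,\dots,X_n)$ of pairwise disjoint open intervals (possibly empty), $X_i$ being player $i$'s piece; it is complete if the union of the closures of the $X_i$ equals $[0,1]$, and partial otherwise. Each player $i$ has a valuation $v_i$, a nonatomic probability measure on $[0,1]$; $u_i(x,j)=v_i(X_j)$. A division is envy-free if $u_i(x,i)\ge u_i(x,j)$ for all $i,j$. Egalitarian welfare: $eg(x)=\min_i u_i(x,i)$. For $\alpha>1$, an instance exhibits an egalitarian $\alpha$-dumping paradox if there is an envy-free partial division $y$ with $eg(y)\ge\alpha\,eg(x)$ for every envy-free complete division $x$. *)

theory Defs
  imports "HOL-Probability.Probability"
begin

definition valuation :: "real measure \<Rightarrow> bool" where
  "valuation M \<longleftrightarrow> prob_space M \<and> space M = {0..1}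
     \<and> sets M = sets (restrict_space borel {0..1})
     \<and> (\<forall>x\<in>{0..1}. measure M {x} = 0)"

definition uniform01 :: "real measure" where
  "uniform01 = restrict_space lborel {0..1}"

definition division :: "nat \<Rightarrow> (nat \<Rightarrow> real set) \<Rightarrow> bool" where
  "division n X \<longleftrightarrow>
     (\<forall>i\<in>{1..n}. \<exists>a b. 0 \<le> a \<and> a \<le> b \<and> b \<le> 1 \<and> X i = {a<..<b})
   \<and> (\<forall>i\<in>{1..n}. \<forall>j\<in>{1..n}. i \<noteq> j \<longrightarrow> X i \<inter> X j = {})"

definition complete_div :: "nat \<Rightarrow> (nat \<Rightarrow> real set) \<Rightarrow> bool" where
  "complete_div n X \<longleftrightarrow> (\<Union>i\<in>{1..n}. closure (X i)) = {0..1}"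

definition util :: "(nat \<Rightarrow> real measure) \<Rightarrow> (nat \<Rightarrow> real set) \<Rightarrow> nat \<Rightarrow> nat \<Rightarrow> real" where
  "util v X i j = measure (v i) (X j)"

definition envy_free :: "(nat \<Rightarrow> real measure) \<Rightarrow> nat \<Rightarrow> (nat \<Rightarrow> real set) \<Rightarrow> bool" where
  "envy_free v n X \<longleftrightarrow> (\<forall>i\<in>{1..n}. \<forall>j\<in>{1..n}. util v X i i \<ge> util v X i j)"

definition eg :: "(nat \<Rightarrow> real measure) \<Rightarrow> nat \<Rightarrow> (nat \<Rightarrow> real set) \<Rightarrow> real" where
  "eg v n X = Min ((\<lambda>i. util v X i i) ` {1..n})"

definition eg_dumping_paradox :: "(nat \<Rightarrow> real measure) \<Rightarrow> nat \<Rightarrow> real \<Rightarrow> bool" where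
  "eg_dumping_paradox v n \<alpha> \<longleftrightarrow> \<alpha> > 1 \<and>
     (\<exists>y. division n y \<and> \<not> complete_div n y \<and> envy_free v n y \<and>
        (\<forall>x. division n x \<and> complete_div n x \<and> envy_free v n x \<longrightarrow> eg v n y \<ge> \<alpha> * eg v n x))"

end

theory Submission
  imports Defs
begin

(* Suppose a complete envy-free connected division gave everyone more than
   1/4 + 2e.  Then the uniform players hold intervals longer than 1/4 + 2e, and a player who does
   not envy a disjoint piece values it at most 1/2.  Looking at who holds the endpoints of the
   cake: a uniform piece at the right end would contain two of player 1's blocks (worth 1/2 + e
   to her), a uniform piece at the left end two of player 2's blocks, and player 2 at the right
   end would leave her piece past 1/2 + 4e, where she values nothing.  So player 1 ends at 1 and
   player 2 starts at 0, the uniform pieces fill a gap of length > 1/2 + 4e between them, player 2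
   must reach beyond 1/4 - e, and then player 1's piece is worth at most 1/2 - 2e to her while
   player 2's contains (0,e), worth 1/2 - e to player 1: envy.

   Lower bound.  The explicit partial division throwing away (1-e,1) is envy-free and gives
   everybody at least 1/2 - 2e; the ratio (1/2 - 2e)/(1/4 + 2e) is the claimed alpha. *)

lemma valuation_sets:
  assumes "valuation M" "A \<in> sets borel" "A \<subseteq> {0..1}"
  shows "A \<in> sets M"
  using assms by (auto simp: valuation_def sets_restrict_space_iff)

lemma valuation_Ioo_sets: "valuation M \<Longrightarrow> 0 \<le> a \<Longrightarrow> b \<le> 1 \<Longrightarrow> {a<..<b} \<in> sets M"
  by (rule valuation_sets) auto

lemma valuation_finite_measure: "valuation M \<Longrightarrow> finite_measure M"
  unfolding valuation_def by (auto intro: prob_space.finite_measure)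

lemma (in finite_measure) measure_le_cover_null:
  assumes "A \<subseteq> B \<union> Z" "B \<in> sets M" "Z \<in> sets M" "measure M Z = 0"
  shows "measure M A \<le> measure M B"
proof -
  have "measure M A \<le> measure M (B \<union> Z)"
    using assms by (intro finite_measure_mono) auto
  also have "\<dots> \<le> measure M B + measure M Z"
    using assms by (intro measure_Un_le) auto
  finally show ?thesis using assms(4) by simp
qed

lemma (in finite_measure) measure_disjoint_le:
  assumes "A \<in> sets M" "B \<in> sets M" "A \<inter> B = {}" "A \<union> B \<subseteq> C" "C \<in> sets M"
  shows "measure M A + measure M B \<le> measure M C"
  using assms finite_measure_Union finite_measure_mono by metis

lemma (in prob_space) unenvied_disjoint_le_half:
  assumes "A \<in> events" "B \<in> events" "A \<inter> B = {}" "prob B \<le> prob A"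
  shows "prob B \<le> 1/2"
proof -
  have "prob A + prob B \<le> 1"
    using finite_measure_Union[OF assms(1-3)] prob_le_1[of "A \<union> B"] by simp
  with assms(4) show ?thesis by linarith
qed

lemma uniform01_Ioo: "0 \<le> a \<Longrightarrow> a \<le> b \<Longrightarrow> b \<le> 1 \<Longrightarrow> measure uniform01 {a<..<b} = b - a"
  unfolding uniform01_def by (subst measure_restrict_space) auto

lemma disjoint_Ioo_ordered:
  fixes a b c d :: real
  assumes "a < b" "c < d" "{a<..<b} \<inter> {c<..<d} = {}"
  shows "b \<le> c \<or> d \<le> a"
proof (rule ccontr)
  assume "\<not> (b \<le> c \<or> d \<le> a)"
  with assms(1,2) have "(max a c + min b d) / 2 \<in> {a<..<b} \<inter> {c<..<d}"
    by (auto simp: max_def min_def)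
  with assms(3) show False by blast
qed

lemma closure_Ioo_subset: "closure {a<..<b} \<subseteq> {a..(b::real)}"
  by (cases "a < b") auto

lemma eg_le_util: "i \<in> {1..n} \<Longrightarrow> eg v n X \<le> util v X i i"
  unfolding eg_def by (rule Min_le) auto

lemma eg_ge: "1 \<le> n \<Longrightarrow> (\<And>i. i \<in> {1..n} \<Longrightarrow> c \<le> util v X i i) \<Longrightarrow> c \<le> eg v n X"
  unfolding eg_def by (subst Min_ge_iff) auto

locale dumping_instance =
  fixes e :: real and v :: "nat \<Rightarrow> real measure"
  assumes e_pos: "0 < e" and e_small: "e < 1/100"
    and val1: "valuation (v 1)" and val2: "valuation (v 2)"
    and uniform3: "v 3 = uniform01" and uniform4: "v 4 = uniform01"
    and v1_head: "measure (v 1) {0<..<e} = 1/2 - e"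
    and v1_mid: "measure (v 1) {3/4<..<3/4 + 3*e} = 3*e"
    and v1_tail: "measure (v 1) {1-e<..<1} = 1/2 - 2*e"
    and v1_rest: "measure (v 1) ({0..1} - ({0<..<e} \<union> {3/4<..<3/4 + 3*e} \<union> {1-e<..<1})) = 0"
    and v2_head: "measure (v 2) {e<..<2*e} = 3*e"
    and v2_mid: "measure (v 2) {1/4-e<..<1/4} = 1/2 - 2*e"
    and v2_tail: "measure (v 2) {1/2<..<1/2+e} = 1/2 - e"
    and v2_rest: "measure (v 2) ({0..1} - ({e<..<2*e} \<union> {1/4-e<..<1/4} \<union> {1/2<..<1/2+e})) = 0"
begin

definition null1 :: "real set" where
  "null1 = {0..1} - ({0<..<e} \<union> {3/4<..<3/4 + 3*e} \<union> {1-e<..<1})"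

definition null2 :: "real set" where
  "null2 = {0..1} - ({e<..<2*e} \<union> {1/4-e<..<1/4} \<union> {1/2<..<1/2+e})"

lemma value1_le_cover: "A \<subseteq> B \<union> null1 \<Longrightarrow> B \<in> sets (v 1) \<Longrightarrow> measure (v 1) A \<le> measure (v 1) B"
proof (rule finite_measure.measure_le_cover_null[OF valuation_finite_measure[OF val1]])
  show "null1 \<in> sets (v 1)" unfolding null1_def by (rule valuation_sets[OF val1]) auto
  show "measure (v 1) null1 = 0" unfolding null1_def by (rule v1_rest)
qed

lemma value2_le_cover: "A \<subseteq> B \<union> null2 \<Longrightarrow> B \<in> sets (v 2) \<Longrightarrow> measure (v 2) A \<le> measure (v 2) B"
proof (rule finite_measure.measure_le_cover_null[OF valuation_finite_measure[OF val2]])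
  show "null2 \<in> sets (v 2)" unfolding null2_def by (rule valuation_sets[OF val2]) auto
  show "measure (v 2) null2 = 0" unfolding null2_def by (rule v2_rest)
qed

lemma value1_two_blocks:
  assumes "{3/4<..<3/4 + 3*e} \<union> {1-e<..<1} \<subseteq> S" "S \<in> sets (v 1)"
  shows "1/2 + e \<le> measure (v 1) S"
proof -
  have "measure (v 1) {3/4<..<3/4 + 3*e} + measure (v 1) {1-e<..<1} \<le> measure (v 1) S"
    using assms e_pos e_small
    by (intro finite_measure.measure_disjoint_le[OF valuation_finite_measure[OF val1]]
        valuation_Ioo_sets[OF val1]) auto
  then show ?thesis using v1_mid v1_tail by simp
qed

lemma value2_two_blocks:
  assumes "{e<..<2*e} \<union> {1/4-e<..<1/4} \<subseteq> S" "S \<in> sets (v 2)"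
  shows "1/2 + e \<le> measure (v 2) S"
proof -
  have "measure (v 2) {e<..<2*e} + measure (v 2) {1/4-e<..<1/4} \<le> measure (v 2) S"
    using assms e_pos e_small
    by (intro finite_measure.measure_disjoint_le[OF valuation_finite_measure[OF val2]]
        valuation_Ioo_sets[OF val2]) auto
  then show ?thesis using v2_head v2_mid by simp
qed

definition dumped :: "nat \<Rightarrow> real set" where
  "dumped = (\<lambda>i. if i = 1 then {0<..<2*e}
                  else if i = 2 then {1/2<..<1/2+e}
                  else if i = 3 then {2*e<..<1/2}
                  else if i = 4 then {1/2+e<..<1-e} else {})"

lemma dumped_pieces:
  "dumped 1 = {0<..<2*e}" "dumped 2 = {1/2<..<1/2+e}"
  "dumped 3 = {2*e<..<1/2}" "dumped 4 = {1/2+e<..<1-e}"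
  by (simp_all add: dumped_def)

lemma dumped_division: "division 4 dumped"
proof -
  have "i \<in> {1..4} \<Longrightarrow> \<exists>a b. 0 \<le> a \<and> a \<le> b \<and> b \<le> 1 \<and> dumped i = {a<..<b}" for i :: nat
  proof -
    assume "i \<in> {1..4}"
    then consider "i = 1" | "i = 2" | "i = 3" | "i = 4" by fastforce
    then show ?thesis
    proof cases
      case 1 then show ?thesis using e_pos e_small by (intro exI[of _ 0] exI[of _ "2*e"]) (simp add: dumped_def)
    next
      case 2 then show ?thesis using e_pos e_small by (intro exI[of _ "1/2"] exI[of _ "1/2+e"]) (simp add: dumped_def)
    next
      case 3 then show ?thesis using e_pos e_small by (intro exI[of _ "2*e"] exI[of _ "1/2"]) (simp add: dumped_def)
    next
      case 4 then show ?thesis using e_pos e_small by (intro exI[of _ "1/2+e"] exI[of _ "1-e"]) (simp add: dumped_def)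
    qed
  qed
  moreover have "i \<in> {1..4} \<Longrightarrow> j \<in> {1..4} \<Longrightarrow> i \<noteq> j \<Longrightarrow> dumped i \<inter> dumped j = {}"
    for i j :: nat
    using e_pos e_small by (auto simp: dumped_def numeral_eq_Suc le_Suc_eq)
  ultimately show ?thesis unfolding division_def by blast
qed

lemma dumped_partial: "\<not> complete_div 4 dumped"
proof
  assume "complete_div 4 dumped"
  then have "1 - e/2 \<in> (\<Union>i\<in>{1..4}. closure (dumped i))"
    using e_pos e_small by (auto simp: complete_div_def)
  then obtain i :: nat where "i \<in> {1..4}" "1 - e/2 \<in> closure (dumped i)" by blast
  with closure_Ioo_subset show False
    using e_pos e_small
    by (auto simp: dumped_def numeral_eq_Suc le_Suc_eq split: if_splits dest!: subsetD)
qed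

lemma dumped_values1:
  "1/2 - e \<le> measure (v 1) (dumped 1)" "measure (v 1) (dumped 2) \<le> 0"
  "measure (v 1) (dumped 3) \<le> 0" "measure (v 1) (dumped 4) \<le> 3*e"
proof -
  have "measure (v 1) {0<..<e} \<le> measure (v 1) (dumped 1)"
    unfolding dumped_pieces using e_pos e_small
    by (intro finite_measure.finite_measure_mono[OF valuation_finite_measure[OF val1]]
        valuation_Ioo_sets[OF val1]) auto
  then show "1/2 - e \<le> measure (v 1) (dumped 1)" using v1_head by simp
  show "measure (v 1) (dumped 2) \<le> 0" "measure (v 1) (dumped 3) \<le> 0"
    unfolding dumped_pieces using e_pos e_small
    by (auto simp: null1_def intro!: value1_le_cover[of _ "{}", simplified])
  have "measure (v 1) (dumped 4) \<le> measure (v 1) {3/4<..<3/4 + 3*e}"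
    unfolding dumped_pieces using e_pos e_small
    by (intro value1_le_cover valuation_Ioo_sets[OF val1]) (auto simp: null1_def)
  then show "measure (v 1) (dumped 4) \<le> 3*e" using v1_mid by simp
qed

lemma dumped_values2:
  "measure (v 2) (dumped 1) \<le> 3*e" "measure (v 2) (dumped 2) = 1/2 - e"
  "measure (v 2) (dumped 3) \<le> 1/2 - 2*e" "measure (v 2) (dumped 4) \<le> 0"
proof -
  have "measure (v 2) (dumped 1) \<le> measure (v 2) {e<..<2*e}"
    unfolding dumped_pieces using e_pos e_small
    by (intro value2_le_cover valuation_Ioo_sets[OF val2]) (auto simp: null2_def)
  then show "measure (v 2) (dumped 1) \<le> 3*e" using v2_head by simp
  show "measure (v 2) (dumped 2) = 1/2 - e" unfolding dumped_pieces by (rule v2_tail)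
  have "measure (v 2) (dumped 3) \<le> measure (v 2) {1/4-e<..<1/4}"
    unfolding dumped_pieces using e_pos e_small
    by (intro value2_le_cover valuation_Ioo_sets[OF val2]) (auto simp: null2_def)
  then show "measure (v 2) (dumped 3) \<le> 1/2 - 2*e" using v2_mid by simp
  show "measure (v 2) (dumped 4) \<le> 0"
    unfolding dumped_pieces using e_pos e_small
    by (auto simp: null2_def intro!: value2_le_cover[of _ "{}", simplified])
qed

lemma dumped_lengths:
  "measure uniform01 (dumped 1) = 2*e" "measure uniform01 (dumped 2) = e"
  "measure uniform01 (dumped 3) = 1/2 - 2*e" "measure uniform01 (dumped 4) = 1/2 - 2*e"
  unfolding dumped_pieces using e_pos e_small by (auto simp: uniform01_Ioo)

lemma dumped_envy_free: "envy_free v 4 dumped"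
proof -
  have "{1..4::nat} = {1,2,3,4}" by auto
  then show ?thesis
    unfolding envy_free_def util_def
    using dumped_values1 dumped_values2 dumped_lengths uniform3 uniform4 e_pos e_small by auto
qed

lemma dumped_utility: "i \<in> {1..4} \<Longrightarrow> 1/2 - 2*e \<le> util v dumped i i"
proof -
  assume "i \<in> {1..4}"
  then consider "i = 1" | "i = 2" | "i = 3" | "i = 4" by fastforce
  then show ?thesis
    unfolding util_def
    using dumped_values1(1) dumped_values2(2) dumped_lengths uniform3 uniform4 e_pos
    by cases auto
qed

end

(* A hypothetical complete envy-free connected division X with pieces {a i<..<b i} in which
   everybody receives more than 1/4 + 2e.  The lemmas of this locale derive a contradiction. *)
locale bad_division = dumping_instance +
  fixes X :: "nat \<Rightarrow> real set" and a b :: "nat \<Rightarrow> real"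
  assumes piece: "i \<in> {1..4} \<Longrightarrow> 0 \<le> a i \<and> a i \<le> b i \<and> b i \<le> 1 \<and> X i = {a i<..<b i}"
    and pieces_disjoint: "i \<in> {1..4} \<Longrightarrow> j \<in> {1..4} \<Longrightarrow> i \<noteq> j \<Longrightarrow> X i \<inter> X j = {}"
    and covers: "complete_div 4 X"
    and no_envy: "envy_free v 4 X"
    and rich: "1/4 + 2*e < eg v 4 X"
begin

lemma piece_bounds:
  assumes "i \<in> {1..4}"
  shows "0 \<le> a i" "b i \<le> 1" "X i = {a i<..<b i}"
  using piece[OF assms] by auto

lemma X_sets: "i \<in> {1..4} \<Longrightarrow> valuation M \<Longrightarrow> X i \<in> sets M"
  using piece[of i] valuation_Ioo_sets[of M "a i" "b i"] by auto

lemma own_rich: "i \<in> {1..4} \<Longrightarrow> 1/4 + 2*e < measure (v i) (X i)"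
  using eg_le_util[of i 4 v X] rich by (simp add: util_def)

lemma envy_bound: "i \<in> {1..4} \<Longrightarrow> j \<in> {1..4} \<Longrightarrow> measure (v i) (X j) \<le> measure (v i) (X i)"
  using no_envy by (simp add: envy_free_def util_def)

lemma others_le_half:
  assumes p: "p \<in> {1,2}" and j: "j \<in> {1..4}" "j \<noteq> p"
  shows "measure (v p) (X j) \<le> 1/2"
proof -
  have val: "valuation (v p)" using p val1 val2 by auto
  have p4: "p \<in> {1..4}" using p by auto
  show ?thesis
    using val j p4 pieces_disjoint[of p j] envy_bound[of p j] X_sets[of p] X_sets[of j]
    by (intro prob_space.unenvied_disjoint_le_half[of "v p" "X p"]) (auto simp: valuation_def)
qed

lemma long_piece: "k \<in> {3,4} \<Longrightarrow> 1/4 + 2*e < b k - a k"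
  using own_rich[of k] piece[of k] uniform3 uniform4 uniform01_Ioo[of "a k" "b k"] by auto

lemma nonempty: "i \<in> {1..4} \<Longrightarrow> a i < b i"
  using own_rich[of i] piece[of i] e_pos by (cases "a i < b i") auto

lemma ordered: "i \<in> {1..4} \<Longrightarrow> j \<in> {1..4} \<Longrightarrow> i \<noteq> j \<Longrightarrow> b i \<le> a j \<or> b j \<le> a i"
  using disjoint_Ioo_ordered[OF nonempty nonempty] pieces_disjoint piece by metis

lemma span_34: "s \<le> a 3 \<Longrightarrow> s \<le> a 4 \<Longrightarrow> b 3 \<le> t \<Longrightarrow> b 4 \<le> t \<Longrightarrow> 1/2 + 4*e < t - s"
  using ordered[of 3 4] long_piece[of 3] long_piece[of 4] by auto

lemma closure_piece: "i \<in> {1..4} \<Longrightarrow> x \<in> closure (X i) \<Longrightarrow> a i \<le> x \<and> x \<le> b i"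
  using piece_bounds(3) closure_Ioo_subset by fastforce

lemma end_pieces: "\<exists>i\<in>{1..4}. b i = 1" "\<exists>j\<in>{1..4}. a j = 0"
proof -
  have "0 \<in> (\<Union>i\<in>{1..4}. closure (X i))" "1 \<in> (\<Union>i\<in>{1..4}. closure (X i))"
    using covers by (auto simp: complete_div_def)
  then obtain i j where "i \<in> {1..4}" "1 \<in> closure (X i)" "j \<in> {1..4}" "0 \<in> closure (X j)"
    by blast
  with closure_piece piece_bounds show "\<exists>i\<in>{1..4}. b i = 1" "\<exists>j\<in>{1..4}. a j = 0"
    by (metis order_antisym)+
qed

(* A uniform piece ending at 1 would contain two blocks of player 1, who would envy it. *)
lemma uniform_not_at_right:
  assumes k: "k \<in> {3,4}" and right: "b k = 1"
  shows False
proof -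
  have "{3/4<..<3/4 + 3*e} \<union> {1-e<..<1} \<subseteq> X k"
    using piece[of k] long_piece[OF k] right k e_pos e_small by auto
  then have "1/2 + e \<le> measure (v 1) (X k)"
    using k by (intro value1_two_blocks X_sets val1) auto
  with others_le_half[of 1 k] k e_pos show False by auto
qed

(* A uniform piece starting at 0 would contain two blocks of player 2, who would envy it. *)
lemma uniform_not_at_left:
  assumes k: "k \<in> {3,4}" and left: "a k = 0"
  shows False
proof -
  have "{e<..<2*e} \<union> {1/4-e<..<1/4} \<subseteq> X k"
    using piece[of k] long_piece[OF k] left k e_pos e_small by auto
  then have "1/2 + e \<le> measure (v 2) (X k)"
    using k by (intro value2_two_blocks X_sets val2) auto
  with others_le_half[of 2 k] k e_pos show False by auto
qed

(* If player 2 ended at 1, both uniform pieces would precede hers, pushing it past 1/2 + 4e,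
   where she values nothing. *)
lemma player2_not_at_right:
  assumes right: "b 2 = 1"
  shows False
proof -
  have "b k \<le> a 2" if "k \<in> {3,4}" for k
    using ordered[of k 2] nonempty[of k] piece[of k] right that by fastforce
  then have "1/2 + 4*e < a 2"
    using span_34[of 0 "a 2"] piece by auto
  then have "X 2 \<subseteq> {} \<union> null2"
    using piece[of 2] e_small by (auto simp: null2_def)
  then have "measure (v 2) (X 2) \<le> measure (v 2) {}"
    by (rule value2_le_cover) simp
  with own_rich[of 2] e_pos show False by simp
qed

(* Player 1 cannot own the whole cake: the uniform pieces need room. *)
lemma player1_not_at_left:
  assumes left: "a 1 = 0" and right: "b 1 = 1"
  shows False
  using ordered[of 1 3] nonempty[of 3] piece[of 3] left right by auto

lemma player1_at_right: "b 1 = 1"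
proof -
  obtain i where i: "i \<in> {1..4}" "b i = 1" using end_pieces(1) by blast
  then consider "i = 1" | "i = 2" | "i \<in> {3,4}" by fastforce
  then show ?thesis
    by cases (use i uniform_not_at_right player2_not_at_right in auto)
qed

lemma player2_at_left: "a 2 = 0"
proof -
  obtain j where j: "j \<in> {1..4}" "a j = 0" using end_pieces(2) by blast
  then consider "j = 1" | "j = 2" | "j \<in> {3,4}" by fastforce
  then show ?thesis
    by cases (use j uniform_not_at_left player1_not_at_left player1_at_right in auto)
qed

lemma middle_gap: "1/2 + 4*e < a 1 - b 2"
proof -
  have "b 2 \<le> a k \<and> b k \<le> a 1" if k: "k \<in> {3,4}" for k
  proof -
    have "k \<in> {1..4}" "k \<noteq> 1" "k \<noteq> 2" using k by auto
    then show ?thesis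
      using ordered[of k 2] ordered[of k 1] nonempty[of k] piece_bounds[of k]
        player2_at_left player1_at_right by auto
  qed
  then show ?thesis using span_34[of "b 2" "a 1"] by auto
qed

(* Player 2 must reach beyond 1/4 - e, otherwise she would get at most 3e. *)
lemma player2_reaches_mid: "1/4 - e < b 2"
proof (rule ccontr)
  assume "\<not> 1/4 - e < b 2"
  then have "X 2 \<subseteq> {e<..<2*e} \<union> null2"
    using piece[of 2] player2_at_left e_pos by (auto simp: null2_def)
  then have "measure (v 2) (X 2) \<le> measure (v 2) {e<..<2*e}"
    using e_pos e_small by (intro value2_le_cover valuation_Ioo_sets[OF val2]) auto
  with v2_head own_rich[of 2] e_small show False by simp
qed

(* Then player 1 gets only her block near 1, worth 1/2 - 2e, while the piece of player 2
   contains (0,e), worth 1/2 - e to player 1. *)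
theorem impossible: False
proof -
  have X1: "X 1 = {a 1<..<1}" and X2: "X 2 = {0<..<b 2}"
    using piece_bounds(3)[of 1] piece_bounds(3)[of 2] player1_at_right player2_at_left by auto
  have "3/4 + 3*e < a 1" using middle_gap player2_reaches_mid by linarith
  then have "X 1 \<subseteq> {1-e<..<1} \<union> null1"
    unfolding X1 using e_pos e_small by (auto simp: null1_def)
  then have "measure (v 1) (X 1) \<le> measure (v 1) {1-e<..<1}"
    using e_pos e_small by (intro value1_le_cover valuation_Ioo_sets[OF val1]) auto
  then have own: "measure (v 1) (X 1) \<le> 1/2 - 2*e" using v1_tail by simp
  have "{0<..<e} \<subseteq> X 2"
    unfolding X2 using player2_reaches_mid e_small by auto
  then have "measure (v 1) {0<..<e} \<le> measure (v 1) (X 2)"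
    by (intro finite_measure.finite_measure_mono[OF valuation_finite_measure[OF val1]] X_sets val1) auto
  with v1_head envy_bound[of 1 2] own e_pos show False by simp
qed

end

theorem (in dumping_instance) upper_bound:
  assumes div: "division 4 X" and full: "complete_div 4 X" and fair: "envy_free v 4 X"
  shows "eg v 4 X \<le> 1/4 + 2*e"
proof (rule ccontr)
  obtain a b where "\<forall>i\<in>{1..4::nat}. 0 \<le> a i \<and> a i \<le> b i \<and> b i \<le> 1 \<and> X i = {a i<..<b i}"
    using div unfolding division_def by metis
  moreover assume "\<not> eg v 4 X \<le> 1/4 + 2*e"
  ultimately have "bad_division e v X a b"
    using div full fair unfolding division_def
    by (intro bad_division.intro dumping_instance_axioms bad_division_axioms.intro) auto
  then show False by (rule bad_division.impossible)
qed

theorem (in dumping_instance) dumping_paradox: "eg_dumping_paradox v 4 ((2 - 8*e) / (1 + 8*e))"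
proof -
  define \<alpha> where "\<alpha> = (2 - 8*e) / (1 + 8*e)"
  have \<alpha>_gt: "1 < \<alpha>" and \<alpha>_scale: "\<alpha> * (1/4 + 2*e) = 1/2 - 2*e"
    unfolding \<alpha>_def using e_pos e_small by (simp_all add: field_simps)
  have eg_dumped: "1/2 - 2*e \<le> eg v 4 dumped"
    by (rule eg_ge) (simp_all add: dumped_utility)
  have "\<alpha> * eg v 4 X \<le> eg v 4 dumped"
    if "division 4 X \<and> complete_div 4 X \<and> envy_free v 4 X" for X
  proof -
    have "\<alpha> * eg v 4 X \<le> \<alpha> * (1/4 + 2*e)"
      using upper_bound that \<alpha>_gt by (intro mult_left_mono) auto
    with \<alpha>_scale eg_dumped show ?thesis by linarith
  qed
  then show ?thesis
    unfolding eg_dumping_paradox_def \<alpha>_def[symmetric]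
    using \<alpha>_gt dumped_division dumped_partial dumped_envy_free by blast
qed

theorem mainTheorem10:
  shows "\<exists>\<epsilon>0>0. \<forall>\<epsilon>::real. 0 < \<epsilon> \<and> \<epsilon> < \<epsilon>0 \<longrightarrow>
    (\<forall>v :: nat \<Rightarrow> real measure.
       valuation (v 1) \<and> valuation (v 2) \<and> v 3 = uniform01 \<and> v 4 = uniform01
     \<and> measure (v 1) {0<..<\<epsilon>} = 1/2 - \<epsilon>
     \<and> measure (v 1) {3/4<..<3/4 + 3*\<epsilon>} = 3*\<epsilon>
     \<and> measure (v 1) {1-\<epsilon><..<1} = 1/2 - 2*\<epsilon>
     \<and> measure (v 1) ({0..1} - ({0<..<\<epsilon>} \<union> {3/4<..<3/4 + 3*\<epsilon>} \<union> {1-\<epsilon><..<1})) = 0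
     \<and> measure (v 2) {\<epsilon><..<2*\<epsilon>} = 3*\<epsilon>
     \<and> measure (v 2) {1/4-\<epsilon><..<1/4} = 1/2 - 2*\<epsilon>
     \<and> measure (v 2) {1/2<..<1/2+\<epsilon>} = 1/2 - \<epsilon>
     \<and> measure (v 2) ({0..1} - ({\<epsilon><..<2*\<epsilon>} \<union> {1/4-\<epsilon><..<1/4} \<union> {1/2<..<1/2+\<epsilon>})) = 0
     \<longrightarrow>
       (\<forall>X. division 4 X \<and> complete_div 4 X \<and> envy_free v 4 X \<longrightarrow> eg v 4 X \<le> 1/4 + 2*\<epsilon>)
     \<and> (let Y = (\<lambda>i::nat. if i = 1 then {0<..<2*\<epsilon>}
                        else if i = 2 then {1/2<..<1/2+\<epsilon>}
                        else if i = 3 then {2*\<epsilon><..<1/2}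
                        else if i = 4 then {1/2+\<epsilon><..<1-\<epsilon>} else {})
        in division 4 Y \<and> \<not> complete_div 4 Y \<and> envy_free v 4 Y
           \<and> (\<forall>i\<in>{1..4}. util v Y i i \<ge> 1/2 - 2*\<epsilon>))
     \<and> eg_dumping_paradox v 4 ((2 - 8*\<epsilon>) / (1 + 8*\<epsilon>)))"
  apply (rule exI[of _ "1/100"], rule conjI, simp)
  apply (intro allI impI)
  subgoal premises hyps for e v
  proof -
    interpret dumping_instance e v
      using hyps by unfold_locales auto
    have dumped: "division 4 dumped \<and> \<not> complete_div 4 dumped \<and> envy_free v 4 dumped
        \<and> (\<forall>i\<in>{1..4}. util v dumped i i \<ge> 1/2 - 2*e)"
      using dumped_division dumped_partial dumped_envy_free dumped_utility by blast
    show ?thesis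
      using upper_bound dumped dumping_paradox unfolding Let_def dumped_def by blast
  qed
  done

end
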